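(* Let $\mathcal G=\mathfrak g_1\oplus\mathfrak g_2$ and $\Theta\in C^1_{\mathsf{LTS}}(\mathcal G,\mathcal G)$, decomposed as $\Theta=\hat\phi_1+\hat\mu_1+\hat\psi+\hat\mu_2+\hat\phi_2$. Then the Maurer–Cartan equation $[\Theta,\Theta]_{\mathsf{LTS}}=0$ is equivalent to the following conditions: $[\hat\phi_1,\hat\mu_1]_{\mathsf{LTS}}=0$; $[\hat\psi,\hat\phi_1]_{\mathsf{LTS}}+\frac12[\hat\mu_1,\hat\mu_1]_{\mathsf{LTS}}=0$; $[\hat\phi_1,\hat\mu_2]_{\mathsf{LTS}}+[\hat\psi,\hat\mu_1]_{\mathsf{LTS}}=0$; $[\hat\phi_1,\hat\phi_2]_{\mathsf{LTS}}+[\hat\mu_1,\hat\mu_2]_{\mathsf{LTS}}+\frac12[\hat\psi,\hat\psi]_{\mathsf{LTS}}=0$; $[\hat\mu_1,\hat\phi_2]_{\mathsf{LTS}}+[\hat\psi,\hat\mu_2]_{\mathsf{LTS}}=0$; $[\hat\psi,\hat\phi_2]_{\mathsf{LTS}}+\frac12[\hat\mu_2,\hat\mu_2]_{\mathsf{LTS}}=0$; $[\hat\mu_2,\hat\phi_2]_{\mathsf{LTS}}=0$.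
   Context: All vector spaces are over a field of characteristic $0$. Cochains: $C^p(\mathcal G,\mathcal G)=\mathrm{Hom}(\otimes^{2p+1}\mathcal G,\mathcal G)$, arguments $(\mathfrak X_1,\dots,\mathfrak X_p,x)$, $\mathfrak X_i=x_i\otimes y_i$; for $P\in C^p,Q\in C^q$, $(P\circ Q)(\mathfrak X_1,\dots,\mathfrak X_{p+q},x)=\sum_{k=1}^p(-1)^{(k-1)q}\sum_{\sigma\in\mathbb S(k-1,q)}(-1)^\sigma P(\mathfrak X_{\sigma(1)},\dots,\mathfrak X_{\sigma(k-1)},Q(\mathfrak X_{\sigma(k)},\dots,\mathfrak X_{\sigma(k+q-1)},x_{k+q})\otimes y_{k+q},\mathfrak X_{k+q+1},\dots,x)+\sum_{k=1}^p(-1)^{(k-1)q}\sum_{\sigma\in\mathbb S(k-1,q)}(-1)^\sigma P(\mathfrak X_{\sigma(1)},\dots,\mathfrak X_{\sigma(k-1)},x_{k+q}\otimes Q(\mathfrak X_{\sigma(k)},\dots,\mathfrak X_{\sigma(k+q-1)},y_{k+q}),\mathfrak X_{k+q+1},\dots,x)+\sum_{\sigma\in\mathbb S(p,q)}(-1)^\sigma P(\mathfrak X_{\sigma(1)},\dots,\mathfrak X_{\sigma(p)},Q(\mathfrak X_{\sigma(p+1)},\dots,\mathfrak X_{\sigma(p+q)},x))$ ($\mathbb S$ = shuffles), $[P,Q]=P\circ Q-(-1)^{pq}Q\circ P$. $C^p_{\mathsf{LTS}}(\mathcal G,\mathcal G)$ is the subspace of $P$ with $P(\dots,x,x,y)=0$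 and $P(\dots,x,y,z)+P(\dots,y,z,x)+P(\dots,z,x,y)=0$; the restricted bracket is $[\cdot,\cdot]_{\mathsf{LTS}}$. Decomposition: writing $\Theta(a,b,c)=[a,b,c]$ and $[a,b,c]_i$ for its $\mathfrak g_i$-component, with $x,y,z\in\mathfrak g_1$, $u,v,w\in\mathfrak g_2$: $\hat\phi_1((x,u),(y,v),(z,w))=(0,[x,y,z]_2)$; $\hat\mu_1=([x,y,z]_1,[x,y,w]_2+[u,y,z]_2-[v,x,z]_2)$; $\hat\psi=([x,y,w]_1+[u,y,z]_1-[v,x,z]_1,[u,v,z]_2+[x,v,w]_2-[y,u,w]_2)$; $\hat\mu_2=([u,v,z]_1+[x,v,w]_1-[y,u,w]_1,[u,v,w]_2)$; $\hat\phi_2=([u,v,w]_1,0)$. These are the components of $\Theta$ of bidegrees $3|-1,2|0,1|1,0|2,-1|3$ (bidegree $l|k$ meaning: tensors with $l+1$ factors from $\mathfrak g_1$ and $k$ from $\mathfrak g_2$ go to $\mathfrak g_1$, tensors with $l$ from $\mathfrak g_1$ and $k+1$ from $\mathfrak g_2$ go to $\mathfrak g_2$, all other tensor types go to $0$). *)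

theory Defs
  imports Main "HOL.Vector_Spaces" "HOL-Library.Product_Plus" "HOL-Combinatorics.Permutations"
begin

text \<open>A p-cochain P in C^p(G,G) = Hom(tensor^(2p+1) G, G) is represented by its
  values on pure tensors: P Xs x, where Xs = [X_1,...,X_p] is the list of pairs
  X_i = (x_i, y_i) and x is the last argument.  Only lists of length p are meaningful.\<close>

type_synonym 'v cochain = "('v \<times> 'v) list \<Rightarrow> 'v \<Rightarrow> 'v"

text \<open>(a, n-a)-shuffles of {0..<n} (0-indexed version of S(a, n-a)).\<close>
definition shuffles :: "nat \<Rightarrow> nat \<Rightarrow> (nat \<Rightarrow> nat) set" where
  "shuffles a n = {\<sigma>. \<sigma> permutes {..<n} \<and> strict_mono_on {..<a} \<sigma> \<and> strict_mono_on {a..<n} \<sigma>}"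

text \<open>The composition P o Q for P in C^p, Q in C^q (k below is the paper's k minus 1).\<close>
definition circ :: "('k::field \<Rightarrow> 'v::ab_group_add \<Rightarrow> 'v) \<Rightarrow> nat \<Rightarrow> nat \<Rightarrow> 'v cochain \<Rightarrow> 'v cochain \<Rightarrow> 'v cochain" where
  "circ smul p q P Q = (\<lambda>Xs x.
     (\<Sum>k<p. smul ((-1) ^ (k * q))
        (\<Sum>\<sigma>\<in>shuffles k (k + q). smul (of_int (sign \<sigma>))
          (P (map (\<lambda>i. Xs ! \<sigma> i) [0..<k]
              @ [(Q (map (\<lambda>i. Xs ! \<sigma> i) [k..<k + q]) (fst (Xs ! (k + q))), snd (Xs ! (k + q)))]
              @ drop (k + q + 1) Xs) x)))
   + (\<Sum>k<p. smul ((-1) ^ (k * q))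
        (\<Sum>\<sigma>\<in>shuffles k (k + q). smul (of_int (sign \<sigma>))
          (P (map (\<lambda>i. Xs ! \<sigma> i) [0..<k]
              @ [(fst (Xs ! (k + q)), Q (map (\<lambda>i. Xs ! \<sigma> i) [k..<k + q]) (snd (Xs ! (k + q))))]
              @ drop (k + q + 1) Xs) x)))
   + (\<Sum>\<sigma>\<in>shuffles p (p + q). smul (of_int (sign \<sigma>))
        (P (map (\<lambda>i. Xs ! \<sigma> i) [0..<p]) (Q (map (\<lambda>i. Xs ! \<sigma> i) [p..<p + q]) x))))"

definition brk :: "('k::field \<Rightarrow> 'v::ab_group_add \<Rightarrow> 'v) \<Rightarrow> nat \<Rightarrow> nat \<Rightarrow> 'v cochain \<Rightarrow> 'v cochain \<Rightarrow> 'v cochain" where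
  "brk smul p q P Q = (\<lambda>Xs x. circ smul p q P Q Xs x - smul ((-1) ^ (p * q)) (circ smul q p Q P Xs x))"

definition cadd :: "'v::ab_group_add cochain \<Rightarrow> 'v cochain \<Rightarrow> 'v cochain" where
  "cadd F G = (\<lambda>Xs x. F Xs x + G Xs x)"

definition cscale :: "('k \<Rightarrow> 'v \<Rightarrow> 'v) \<Rightarrow> 'k \<Rightarrow> 'v cochain \<Rightarrow> 'v cochain" where
  "cscale smul c F = (\<lambda>Xs x. smul c (F Xs x))"

definition cochain_zero :: "nat \<Rightarrow> 'v::zero cochain \<Rightarrow> bool" where
  "cochain_zero n F \<longleftrightarrow> (\<forall>Xs x. length Xs = n \<longrightarrow> F Xs x = 0)"

definition ch1 :: "('v \<Rightarrow> 'v \<Rightarrow> 'v \<Rightarrow> 'v) \<Rightarrow> 'v cochain" where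
  "ch1 T = (\<lambda>Xs x. T (fst (hd Xs)) (snd (hd Xs)) x)"

text \<open>The direct sum G = g1 (+) g2 as the product type with componentwise scaling.\<close>
definition prod_scale :: "('k \<Rightarrow> 'a \<Rightarrow> 'a) \<Rightarrow> ('k \<Rightarrow> 'b \<Rightarrow> 'b) \<Rightarrow> 'k \<Rightarrow> 'a \<times> 'b \<Rightarrow> 'a \<times> 'b" where
  "prod_scale s1 s2 c v = (s1 c (fst v), s2 c (snd v))"

definition trilinear :: "('k::field \<Rightarrow> 'v::ab_group_add \<Rightarrow> 'v) \<Rightarrow> ('v \<Rightarrow> 'v \<Rightarrow> 'v \<Rightarrow> 'v) \<Rightarrow> bool" where
  "trilinear S T \<longleftrightarrow>
     (\<forall>b c. Vector_Spaces.linear S S (\<lambda>a. T a b c)) \<and>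
     (\<forall>a c. Vector_Spaces.linear S S (\<lambda>b. T a b c)) \<and>
     (\<forall>a b. Vector_Spaces.linear S S (\<lambda>c. T a b c))"

definition LTS_cochain1 :: "('k::field \<Rightarrow> 'v::ab_group_add \<Rightarrow> 'v) \<Rightarrow> ('v \<Rightarrow> 'v \<Rightarrow> 'v \<Rightarrow> 'v) \<Rightarrow> bool" where
  "LTS_cochain1 S T \<longleftrightarrow> trilinear S T \<and> (\<forall>x y. T x x y = 0) \<and>
     (\<forall>x y z. T x y z + T y z x + T z x y = 0)"

text \<open>Components of Theta; [a,b,c]_1 = fst (T a b c), [a,b,c]_2 = snd (T a b c),
  with g1, g2 embedded as (x,0), (0,u).\<close>
definition phi1 :: "(('a::zero \<times> 'b::zero) \<Rightarrow> ('a \<times> 'b) \<Rightarrow> ('a \<times> 'b) \<Rightarrow> ('a \<times> 'b)) \<Rightarrow> ('a \<times> 'b) \<Rightarrow> ('a \<times> 'b) \<Rightarrow> ('a \<times> 'b) \<Rightarrow> ('a \<times> 'b)" where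
  "phi1 T = (\<lambda>(x,u) (y,v) (z,w). (0, snd (T (x,0) (y,0) (z,0))))"

definition mu1 :: "(('a::ab_group_add \<times> 'b::ab_group_add) \<Rightarrow> ('a \<times> 'b) \<Rightarrow> ('a \<times> 'b) \<Rightarrow> ('a \<times> 'b)) \<Rightarrow> ('a \<times> 'b) \<Rightarrow> ('a \<times> 'b) \<Rightarrow> ('a \<times> 'b) \<Rightarrow> ('a \<times> 'b)" where
  "mu1 T = (\<lambda>(x,u) (y,v) (z,w). (fst (T (x,0) (y,0) (z,0)),
      snd (T (x,0) (y,0) (0,w)) + snd (T (0,u) (y,0) (z,0)) - snd (T (0,v) (x,0) (z,0))))"

definition psi :: "(('a::ab_group_add \<times> 'b::ab_group_add) \<Rightarrow> ('a \<times> 'b) \<Rightarrow> ('a \<times> 'b) \<Rightarrow> ('a \<times> 'b)) \<Rightarrow> ('a \<times> 'b) \<Rightarrow> ('a \<times> 'b) \<Rightarrow> ('a \<times> 'b) \<Rightarrow> ('a \<times> 'b)" where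
  "psi T = (\<lambda>(x,u) (y,v) (z,w).
     (fst (T (x,0) (y,0) (0,w)) + fst (T (0,u) (y,0) (z,0)) - fst (T (0,v) (x,0) (z,0)),
      snd (T (0,u) (0,v) (z,0)) + snd (T (x,0) (0,v) (0,w)) - snd (T (y,0) (0,u) (0,w))))"

definition mu2 :: "(('a::ab_group_add \<times> 'b::ab_group_add) \<Rightarrow> ('a \<times> 'b) \<Rightarrow> ('a \<times> 'b) \<Rightarrow> ('a \<times> 'b)) \<Rightarrow> ('a \<times> 'b) \<Rightarrow> ('a \<times> 'b) \<Rightarrow> ('a \<times> 'b) \<Rightarrow> ('a \<times> 'b)" where
  "mu2 T = (\<lambda>(x,u) (y,v) (z,w).
     (fst (T (0,u) (0,v) (z,0)) + fst (T (x,0) (0,v) (0,w)) - fst (T (y,0) (0,u) (0,w)),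
      snd (T (0,u) (0,v) (0,w))))"

definition phi2 :: "(('a::zero \<times> 'b::zero) \<Rightarrow> ('a \<times> 'b) \<Rightarrow> ('a \<times> 'b) \<Rightarrow> ('a \<times> 'b)) \<Rightarrow> ('a \<times> 'b) \<Rightarrow> ('a \<times> 'b) \<Rightarrow> ('a \<times> 'b) \<Rightarrow> ('a \<times> 'b)" where
  "phi2 T = (\<lambda>(x,u) (y,v) (z,w). (fst (T (0,u) (0,v) (0,w)), 0))"

end

theory Submission
  imports Defs "HOL-Library.Function_Algebras"
begin

(* Give g1 weight 0 and g2 weight 1.  The component of bidegree (2 - k)|k of a 1-cochain sends
   arguments of total weight c to values of weight c - k, and phi1, mu1, psi, mu2, phi2 are exactly
   the components of Theta with k = -1, ..., 3 (this uses [x,x,y] = 0).  For 1-cochains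
   [P,Q] = P o Q + Q o P, and P o Q has bidegree index the sum of those of P and Q.  Hence
   [Theta,Theta] = 2 Theta o Theta splits into the pieces sum_{i+j=m} Theta_i o Theta_j of pairwise
   distinct bidegree.  A multi-additive map vanishes as soon as it vanishes on homogeneous
   arguments, and there the pieces are told apart by the weight of their values; so
   [Theta,Theta] = 0 iff every piece vanishes.  The pieces m = -2 and m = 6 vanish identically,
   the other seven are the conditions of the proposition, whose factors 1/2 undo the doubling
   [P,P] = 2 P o P. *)

definition additive3 :: "('u::ab_group_add \<Rightarrow> 'u \<Rightarrow> 'u \<Rightarrow> 'w::ab_group_add) \<Rightarrow> bool" where
  "additive3 F \<longleftrightarrow> (\<forall>v w. additive (\<lambda>u. F u v w)) \<and> (\<forall>u w. additive (\<lambda>v. F u v w))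
    \<and> (\<forall>u v. additive (\<lambda>w. F u v w))"

lemma additive3I:
  assumes "\<And>u u' v w. F (u + u') v w = F u v w + F u' v w"
    and "\<And>u v v' w. F u (v + v') w = F u v w + F u v' w"
    and "\<And>u v w w'. F u v (w + w') = F u v w + F u v w'"
  shows "additive3 F"
  using assms by (simp add: additive3_def additive_def)

definition additive5 :: "('u::ab_group_add \<Rightarrow> 'u \<Rightarrow> 'u \<Rightarrow> 'u \<Rightarrow> 'u \<Rightarrow> 'w::ab_group_add) \<Rightarrow> bool" where
  "additive5 E \<longleftrightarrow> (\<forall>u1 u2 u3 u4. additive (\<lambda>u0. E u0 u1 u2 u3 u4))
    \<and> (\<forall>u0 u2 u3 u4. additive (\<lambda>u1. E u0 u1 u2 u3 u4))
    \<and> (\<forall>u0 u1 u3 u4. additive (\<lambda>u2. E u0 u1 u2 u3 u4))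
    \<and> (\<forall>u0 u1 u2 u4. additive (\<lambda>u3. E u0 u1 u2 u3 u4))
    \<and> (\<forall>u0 u1 u2 u3. additive (\<lambda>u4. E u0 u1 u2 u3 u4))"

lemma additive3_add:
  assumes "additive3 F"
  shows "F (u + u') v w = F u v w + F u' v w" "F u (v + v') w = F u v w + F u v' w"
    "F u v (w + w') = F u v w + F u v w'"
  using assms by (auto simp: additive3_def additive_def)

lemma additive3_zero:
  assumes "additive3 F"
  shows "F 0 v w = 0" "F u 0 w = 0" "F u v 0 = 0"
  using assms by (auto simp: additive3_def intro: additive.zero)

lemma additive3_plus: "additive3 F \<Longrightarrow> additive3 G \<Longrightarrow> additive3 (F + G)"
  by (simp add: additive3_def additive_def algebra_simps)

lemma additive3_if_trilinear: "trilinear S T \<Longrightarrow> additive3 T"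
  unfolding trilinear_def additive3_def additive_def linear_iff_module_hom module_hom_iff
  by blast

lemma additive5_plus: "additive5 E \<Longrightarrow> additive5 E' \<Longrightarrow> additive5 (E + E')"
  by (simp add: additive5_def additive_def algebra_simps)

lemma shuffles_0_1: "shuffles 0 1 = {id}"
  by (auto simp: shuffles_def lessThan_Suc strict_mono_on_def)

lemma shuffles_1_2: "shuffles 1 2 = {id, transpose 0 1}"
proof -
  have "{..<2::nat} = {0, 1}" by auto
  then show ?thesis
    by (auto simp: shuffles_def permutes_doubleton_iff strict_mono_on_def)
qed

definition circ1 :: "('v \<Rightarrow> 'v \<Rightarrow> 'v \<Rightarrow> 'v::ab_group_add) \<Rightarrow> ('v \<Rightarrow> 'v \<Rightarrow> 'v \<Rightarrow> 'v)
    \<Rightarrow> 'v \<Rightarrow> 'v \<Rightarrow> 'v \<Rightarrow> 'v \<Rightarrow> 'v \<Rightarrow> 'v" where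
  "circ1 P Q x0 y0 x1 y1 x =
     P (Q x0 y0 x1) y1 x + P x1 (Q x0 y0 y1) x + P x0 y0 (Q x1 y1 x) - P x1 y1 (Q x0 y0 x)"

lemma circ_ch1:
  assumes "module S"
  shows "circ S 1 1 (ch1 P) (ch1 Q) [(x0, y0), (x1, y1)] x = circ1 P Q x0 y0 x1 y1 x"
proof -
  have "transpose (0::nat) 1 \<noteq> id"
    by (metis id_apply transpose_apply_first zero_neq_one)
  moreover have "S (-1) v = - v" for v
    using module.scale_minus_left[OF assms, of 1] by (simp add: module.scale_one[OF assms])
  ultimately show ?thesis
    using shuffles_0_1 shuffles_1_2
    by (simp add: circ_def circ1_def ch1_def numeral_2_eq_2 sign_swap_id module.scale_one[OF assms])
qed

lemma brk_ch1:
  assumes "module S"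
  shows "brk S 1 1 (ch1 P) (ch1 Q) [(x0, y0), (x1, y1)] x
    = circ1 P Q x0 y0 x1 y1 x + circ1 Q P x0 y0 x1 y1 x"
  using module.scale_minus_left[OF assms, of 1 "circ1 Q P x0 y0 x1 y1 x"]
  unfolding brk_def circ_ch1[OF assms] by (simp add: module.scale_one[OF assms])

lemma cochain_zero_2_iff:
  "cochain_zero 2 F \<longleftrightarrow> (\<forall>x0 y0 x1 y1 x. F [(x0, y0), (x1, y1)] x = 0)"
  by (auto simp: cochain_zero_def numeral_2_eq_2 length_Suc_conv)

lemma circ1_add_left: "circ1 (P + P') Q = circ1 P Q + circ1 P' Q"
  by (simp add: fun_eq_iff circ1_def algebra_simps)

lemma circ1_add_right: "additive3 P \<Longrightarrow> circ1 P (Q + Q') = circ1 P Q + circ1 P Q'"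
  by (simp add: fun_eq_iff circ1_def additive3_add algebra_simps)

lemma additive5_circ1: "additive3 P \<Longrightarrow> additive3 Q \<Longrightarrow> additive5 (circ1 P Q)"
  by (simp add: additive5_def additive_def circ1_def additive3_add algebra_simps)

section \<open>Weights and bidegrees on a direct sum\<close>

definition weight_part :: "int \<Rightarrow> 'a::zero \<times> 'b::zero \<Rightarrow> 'a \<times> 'b" where
  "weight_part i v = (if i = 0 then (fst v, 0) else if i = 1 then (0, snd v) else 0)"

definition homogeneous :: "int \<Rightarrow> 'a::zero \<times> 'b::zero \<Rightarrow> bool" where
  "homogeneous i v \<longleftrightarrow> weight_part i v = v"

lemma homogeneous_iff:
  "homogeneous i v \<longleftrightarrow> i = 0 \<and> snd v = 0 \<or> i = 1 \<and> fst v = 0 \<or> v = 0"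
  by (auto simp: homogeneous_def weight_part_def prod_eq_iff)

lemma homogeneous_add:
  fixes u v :: "'a::monoid_add \<times> 'b::monoid_add"
  shows "homogeneous i u \<Longrightarrow> homogeneous i v \<Longrightarrow> homogeneous i (u + v)"
  by (auto simp: homogeneous_def weight_part_def prod_eq_iff)

lemma homogeneous_diff:
  fixes u v :: "'a::ab_group_add \<times> 'b::ab_group_add"
  shows "homogeneous i u \<Longrightarrow> homogeneous i v \<Longrightarrow> homogeneous i (u - v)"
  by (auto simp: homogeneous_def weight_part_def prod_eq_iff)

lemma weight_part_zero [simp]: "weight_part i 0 = 0"
  by (simp add: weight_part_def zero_prod_def)

lemma weight_part_add:
  fixes u v :: "'a::monoid_add \<times> 'b::monoid_add"
  shows "weight_part i (u + v) = weight_part i u + weight_part i v"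
  by (simp add: weight_part_def)

lemma weight_part_homogeneous:
  "homogeneous j v \<Longrightarrow> weight_part i v = (if i = j then v else 0)"
  by (auto simp: homogeneous_iff weight_part_def prod_eq_iff)

lemma homogeneous_weight_part: "homogeneous i (weight_part i v)"
  by (simp add: homogeneous_iff weight_part_def)

lemma weight_decomposition:
  fixes v :: "'a::monoid_add \<times> 'b::monoid_add"
  shows "v = weight_part 0 v + weight_part 1 v"
  by (simp add: weight_part_def)

lemma additive_vanishes_if_vanishes_on_homogeneous:
  fixes f :: "'a::ab_group_add \<times> 'b::ab_group_add \<Rightarrow> 'c::ab_group_add"
  assumes "additive f" and "\<And>i u. homogeneous i u \<Longrightarrow> f u = 0"
  shows "f v = 0"
  using additive.add[OF assms(1), of "weight_part 0 v" "weight_part 1 v"]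
  by (simp flip: weight_decomposition add: assms(2)[OF homogeneous_weight_part])

lemma additive5_eq_0_if_vanishes_on_homogeneous:
  fixes E :: "'a::ab_group_add \<times> 'b::ab_group_add \<Rightarrow> 'a \<times> 'b \<Rightarrow> 'a \<times> 'b \<Rightarrow> 'a \<times> 'b
    \<Rightarrow> 'a \<times> 'b \<Rightarrow> 'c::ab_group_add"
  assumes add: "additive5 E"
    and hom: "\<And>i0 i1 i2 i3 i4 u0 u1 u2 u3 u4. homogeneous i0 u0 \<Longrightarrow> homogeneous i1 u1
      \<Longrightarrow> homogeneous i2 u2 \<Longrightarrow> homogeneous i3 u3 \<Longrightarrow> homogeneous i4 u4 \<Longrightarrow> E u0 u1 u2 u3 u4 = 0"
  shows "E = 0"
proof (intro ext)
  note vanish = additive_vanishes_if_vanishes_on_homogeneous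
  have add_at: "additive (\<lambda>u0. E u0 u1 u2 u3 u4)" "additive (\<lambda>u1. E u0 u1 u2 u3 u4)"
    "additive (\<lambda>u2. E u0 u1 u2 u3 u4)" "additive (\<lambda>u3. E u0 u1 u2 u3 u4)"
    "additive (\<lambda>u4. E u0 u1 u2 u3 u4)" for u0 u1 u2 u3 u4
    using add unfolding additive5_def by blast+
  fix u0 u1 u2 u3 u4
  have h1: "E u0 u1 u2 u3 u4 = 0" if "homogeneous i1 u1" "homogeneous i2 u2" "homogeneous i3 u3"
    "homogeneous i4 u4" for i1 i2 i3 i4 u0 u1 u2 u3 u4
    by (rule vanish[OF add_at(1)]) (use hom that in blast)
  have h2: "E u0 u1 u2 u3 u4 = 0" if "homogeneous i2 u2" "homogeneous i3 u3" "homogeneous i4 u4"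
    for i2 i3 i4 u0 u1 u2 u3 u4
    by (rule vanish[OF add_at(2)]) (use h1 that in blast)
  have h3: "E u0 u1 u2 u3 u4 = 0" if "homogeneous i3 u3" "homogeneous i4 u4"
    for i3 i4 u0 u1 u2 u3 u4
    by (rule vanish[OF add_at(3)]) (use h2 that in blast)
  have h4: "E u0 u1 u2 u3 u4 = 0" if "homogeneous i4 u4" for i4 u0 u1 u2 u3 u4
    by (rule vanish[OF add_at(4)]) (use h3 that in blast)
  show "E u0 u1 u2 u3 u4 = 0 u0 u1 u2 u3 u4"
    unfolding zero_fun_apply by (rule vanish[OF add_at(5)]) (use h4 in blast)
qed

(* bidegree3 k is the paper's bidegree (2 - k)|k and bidegree5 k is (4 - k)|k: the value has the
   total weight of the arguments minus k. *)
definition bidegree3 :: "int \<Rightarrow> ('a::zero \<times> 'b::zero \<Rightarrow> 'a \<times> 'b \<Rightarrow> 'a \<times> 'b \<Rightarrow> 'a \<times> 'b) \<Rightarrow> bool" where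
  "bidegree3 k F \<longleftrightarrow> (\<forall>i j l u v w. homogeneous i u \<longrightarrow> homogeneous j v \<longrightarrow> homogeneous l w
    \<longrightarrow> homogeneous (i + j + l - k) (F u v w))"

definition bidegree5 :: "int \<Rightarrow> ('a::zero \<times> 'b::zero \<Rightarrow> 'a \<times> 'b \<Rightarrow> 'a \<times> 'b \<Rightarrow> 'a \<times> 'b
    \<Rightarrow> 'a \<times> 'b \<Rightarrow> 'a \<times> 'b) \<Rightarrow> bool" where
  "bidegree5 k E \<longleftrightarrow> (\<forall>i0 i1 i2 i3 i4 u0 u1 u2 u3 u4. homogeneous i0 u0 \<longrightarrow> homogeneous i1 u1
    \<longrightarrow> homogeneous i2 u2 \<longrightarrow> homogeneous i3 u3 \<longrightarrow> homogeneous i4 u4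
    \<longrightarrow> homogeneous (i0 + i1 + i2 + i3 + i4 - k) (E u0 u1 u2 u3 u4))"

lemma bidegree3D:
  assumes "bidegree3 k F" "homogeneous i u" "homogeneous j v" "homogeneous l w" "i + j + l - k = n"
  shows "homogeneous n (F u v w)"
  using assms unfolding bidegree3_def by blast

lemma bidegree5D:
  assumes "bidegree5 k E" "homogeneous i0 u0" "homogeneous i1 u1" "homogeneous i2 u2"
    "homogeneous i3 u3" "homogeneous i4 u4"
  shows "homogeneous (i0 + i1 + i2 + i3 + i4 - k) (E u0 u1 u2 u3 u4)"
  using assms unfolding bidegree5_def by blast

lemma bidegree5_plus:
  fixes E E' :: "'a::monoid_add \<times> 'b::monoid_add \<Rightarrow> 'a \<times> 'b \<Rightarrow> 'a \<times> 'b \<Rightarrow> 'a \<times> 'b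
    \<Rightarrow> 'a \<times> 'b \<Rightarrow> 'a \<times> 'b"
  shows "bidegree5 k E \<Longrightarrow> bidegree5 k E' \<Longrightarrow> bidegree5 k (E + E')"
  by (simp add: bidegree5_def homogeneous_add)

lemma bidegree5_circ1:
  fixes P Q :: "'a::ab_group_add \<times> 'b::ab_group_add \<Rightarrow> 'a \<times> 'b \<Rightarrow> 'a \<times> 'b \<Rightarrow> 'a \<times> 'b"
  assumes P: "bidegree3 k P" and Q: "bidegree3 k' Q" and m: "k + k' = m"
  shows "bidegree5 m (circ1 P Q)"
  unfolding bidegree5_def circ1_def
proof (intro allI impI)
  fix i0 i1 i2 i3 i4 and u0 u1 u2 u3 u4 :: "'a \<times> 'b"
  assume "homogeneous i0 u0" "homogeneous i1 u1" "homogeneous i2 u2" "homogeneous i3 u3"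
    "homogeneous i4 u4"
  then show "homogeneous (i0 + i1 + i2 + i3 + i4 - m)
      (P (Q u0 u1 u2) u3 u4 + P u2 (Q u0 u1 u3) u4 + P u0 u1 (Q u2 u3 u4) - P u2 u3 (Q u0 u1 u4))"
    by (intro homogeneous_add homogeneous_diff bidegree3D[OF P] bidegree3D[OF Q])
      (assumption | simp add: m[symmetric])+
qed

lemma sum_list_apply: "(\<Sum>x\<leftarrow>xs. f x) a = (\<Sum>x\<leftarrow>xs. f x a)"
  by (induction xs) simp_all

lemma weight_part_sum_list:
  fixes f :: "'c \<Rightarrow> 'a::monoid_add \<times> 'b::monoid_add"
  shows "weight_part i (\<Sum>x\<leftarrow>xs. f x) = (\<Sum>x\<leftarrow>xs. weight_part i (f x))"
  by (induction xs) (simp_all add: weight_part_add)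

lemma weight_part_sum_list_bidegree5:
  fixes Es :: "(int \<times> ('a::ab_group_add \<times> 'b::ab_group_add \<Rightarrow> 'a \<times> 'b \<Rightarrow> 'a \<times> 'b \<Rightarrow> 'a \<times> 'b
    \<Rightarrow> 'a \<times> 'b \<Rightarrow> 'a \<times> 'b)) list"
  assumes distinct: "distinct (map fst Es)"
    and graded: "\<And>m E. (m, E) \<in> set Es \<Longrightarrow> bidegree5 m E"
    and mE: "(m, E) \<in> set Es"
    and hom: "homogeneous i0 u0" "homogeneous i1 u1" "homogeneous i2 u2" "homogeneous i3 u3"
      "homogeneous i4 u4"
  shows "weight_part (i0 + i1 + i2 + i3 + i4 - m) (\<Sum>(m', E')\<leftarrow>Es. E' u0 u1 u2 u3 u4)
    = E u0 u1 u2 u3 u4"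
proof -
  have distinct_Es: "distinct Es"
    using distinct by (simp add: distinct_map)
  have "weight_part (i0 + i1 + i2 + i3 + i4 - m) (E' u0 u1 u2 u3 u4)
      = (if m' = m then E' u0 u1 u2 u3 u4 else 0)" if "(m', E') \<in> set Es" for m' E'
    using weight_part_homogeneous[OF bidegree5D[OF graded[OF that] hom]] by simp
  then have "weight_part (i0 + i1 + i2 + i3 + i4 - m) (\<Sum>(m', E')\<leftarrow>Es. E' u0 u1 u2 u3 u4)
      = (\<Sum>(m', E')\<leftarrow>Es. if m' = m then E' u0 u1 u2 u3 u4 else 0)"
    unfolding weight_part_sum_list by (intro arg_cong[where f = sum_list] map_cong) auto
  also have "\<dots> = (\<Sum>x\<in>set Es. if x = (m, E) then E u0 u1 u2 u3 u4 else 0)"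
    unfolding sum_list_distinct_conv_sum_set[OF distinct_Es]
  proof (rule sum.cong[OF refl])
    fix x assume x: "x \<in> set Es"
    obtain m' E' where "x = (m', E')" by (cases x)
    with x show "(case x of (m', E') \<Rightarrow> if m' = m then E' u0 u1 u2 u3 u4 else 0)
        = (if x = (m, E) then E u0 u1 u2 u3 u4 else 0)"
      by (auto dest: eq_key_imp_eq_value[OF distinct _ mE])
  qed
  also have "\<dots> = E u0 u1 u2 u3 u4"
    using mE by simp
  finally show ?thesis .
qed

lemma sum_list_bidegree5_eq_0_iff:
  fixes Es :: "(int \<times> ('a::ab_group_add \<times> 'b::ab_group_add \<Rightarrow> 'a \<times> 'b \<Rightarrow> 'a \<times> 'b \<Rightarrow> 'a \<times> 'b
    \<Rightarrow> 'a \<times> 'b \<Rightarrow> 'a \<times> 'b)) list"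
  assumes distinct: "distinct (map fst Es)"
    and graded: "\<And>m E. (m, E) \<in> set Es \<Longrightarrow> additive5 E \<and> bidegree5 m E"
  shows "(\<Sum>(m, E)\<leftarrow>Es. E) = 0 \<longleftrightarrow> (\<forall>(m, E)\<in>set Es. E = 0)"
proof
  assume sum_0: "(\<Sum>(m, E)\<leftarrow>Es. E) = 0"
  show "\<forall>(m, E)\<in>set Es. E = 0"
  proof (clarify)
    fix m E assume mE: "(m, E) \<in> set Es"
    show "E = 0"
    proof (rule additive5_eq_0_if_vanishes_on_homogeneous)
      show "additive5 E"
        using graded[OF mE] ..
      fix i0 i1 i2 i3 i4 and u0 u1 u2 u3 u4 :: "'a \<times> 'b"
      assume "homogeneous i0 u0" "homogeneous i1 u1" "homogeneous i2 u2" "homogeneous i3 u3"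
        "homogeneous i4 u4"
      from weight_part_sum_list_bidegree5[OF distinct _ mE this] graded
      have "E u0 u1 u2 u3 u4
          = weight_part (i0 + i1 + i2 + i3 + i4 - m) (\<Sum>(m', E')\<leftarrow>Es. E' u0 u1 u2 u3 u4)"
        by simp
      also have "(\<Sum>(m', E')\<leftarrow>Es. E' u0 u1 u2 u3 u4) = 0"
        using arg_cong[OF sum_0, of "\<lambda>F. F u0 u1 u2 u3 u4"] by (simp add: sum_list_apply split_def)
      finally show "E u0 u1 u2 u3 u4 = 0"
        by simp
    qed
  qed
next
  assume "\<forall>(m, E)\<in>set Es. E = 0"
  then have "(\<Sum>(m, E)\<leftarrow>Es. E) = (\<Sum>x\<leftarrow>Es. 0)"
    by (intro arg_cong[where f = sum_list] map_cong) auto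
  then show "(\<Sum>(m, E)\<leftarrow>Es. E) = 0"
    by simp
qed

lemma Pair_add_zero:
  "(a + a', 0::'b::monoid_add) = (a, 0) + (a', 0)" "(0::'a::monoid_add, b + b') = (0, b) + (0, b')"
  by simp_all

lemma phi1_apply: "phi1 T u v w = (0, snd (T (fst u, 0) (fst v, 0) (fst w, 0)))"
  by (simp add: phi1_def split_beta)

lemma mu1_apply: "mu1 T u v w = (fst (T (fst u, 0) (fst v, 0) (fst w, 0)),
    snd (T (fst u, 0) (fst v, 0) (0, snd w)) + snd (T (0, snd u) (fst v, 0) (fst w, 0))
    - snd (T (0, snd v) (fst u, 0) (fst w, 0)))"
  by (simp add: mu1_def split_beta)

lemma psi_apply: "psi T u v w =
   (fst (T (fst u, 0) (fst v, 0) (0, snd w)) + fst (T (0, snd u) (fst v, 0) (fst w, 0))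
      - fst (T (0, snd v) (fst u, 0) (fst w, 0)),
    snd (T (0, snd u) (0, snd v) (fst w, 0)) + snd (T (fst u, 0) (0, snd v) (0, snd w))
      - snd (T (fst v, 0) (0, snd u) (0, snd w)))"
  by (simp add: psi_def split_beta)

lemma mu2_apply: "mu2 T u v w =
   (fst (T (0, snd u) (0, snd v) (fst w, 0)) + fst (T (fst u, 0) (0, snd v) (0, snd w))
      - fst (T (fst v, 0) (0, snd u) (0, snd w)),
    snd (T (0, snd u) (0, snd v) (0, snd w)))"
  by (simp add: mu2_def split_beta)

lemma phi2_apply: "phi2 T u v w = (fst (T (0, snd u) (0, snd v) (0, snd w)), 0)"
  by (simp add: phi2_def split_beta)

lemmas component_apply = phi1_apply mu1_apply psi_apply mu2_apply phi2_apply

context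
  fixes T :: "'a::ab_group_add \<times> 'b::ab_group_add \<Rightarrow> 'a \<times> 'b \<Rightarrow> 'a \<times> 'b \<Rightarrow> 'a \<times> 'b"
  assumes add: "additive3 T"
begin

lemma additive3_components:
  shows "additive3 (phi1 T)" "additive3 (mu1 T)" "additive3 (psi T)" "additive3 (mu2 T)"
    "additive3 (phi2 T)"
  by (intro additive3I;
      simp add: component_apply Pair_add_zero additive3_add[OF add] prod_eq_iff algebra_simps
      del: add_Pair)+

lemma bidegree3_components:
  shows "bidegree3 (-1) (phi1 T)" "bidegree3 0 (mu1 T)" "bidegree3 1 (psi T)"
    "bidegree3 2 (mu2 T)" "bidegree3 3 (phi2 T)"
  unfolding bidegree3_def homogeneous_iff
  by (auto simp: component_apply additive3_zero[OF add] zero_prod_def[symmetric])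

lemma alternating_imp_skew:
  assumes alt: "\<And>x y. T x x y = 0"
  shows "T y x z = - T x y z"
proof -
  have "0 = T (x + y) (x + y) z"
    using alt by simp
  also have "\<dots> = T x y z + T y x z"
    unfolding additive3_add[OF add] by (simp add: alt)
  finally show ?thesis
    by (metis eq_neg_iff_add_eq_0 add.commute)
qed

lemma lts_cochain_decomposition:
  assumes alt: "\<And>x y. T x x y = 0"
  shows "T = phi1 T + mu1 T + psi T + mu2 T + phi2 T"
proof (intro ext)
  fix u v w
  have "T u v w = T ((fst u, 0) + (0, snd u)) ((fst v, 0) + (0, snd v)) ((fst w, 0) + (0, snd w))"
    by simp
  also have "\<dots> = (phi1 T + mu1 T + psi T + mu2 T + phi2 T) u v w"
    unfolding additive3_add[OF add]
    by (simp add: component_apply alternating_imp_skew[OF alt, of "(0, _)" "(_, 0)"]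
        prod_eq_iff algebra_simps)
  finally show "T u v w = (phi1 T + mu1 T + psi T + mu2 T + phi2 T) u v w" .
qed

section \<open>The Maurer-Cartan equation\<close>

lemma circ1_phi1_phi1: "circ1 (phi1 T) (phi1 T) = 0"
  by (simp add: fun_eq_iff circ1_def phi1_apply additive3_zero[OF add] zero_prod_def[symmetric])

lemma circ1_phi2_phi2: "circ1 (phi2 T) (phi2 T) = 0"
  by (simp add: fun_eq_iff circ1_def phi2_apply additive3_zero[OF add] zero_prod_def[symmetric])

lemma maurer_cartan_components:
  assumes alt: "\<And>x y. T x x y = 0"
  defines "\<phi>\<^sub>1 \<equiv> phi1 T" and "\<mu>\<^sub>1 \<equiv> mu1 T" and "\<psi> \<equiv> psi T" and "\<mu>\<^sub>2 \<equiv> mu2 T"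
    and "\<phi>\<^sub>2 \<equiv> phi2 T"
  shows "circ1 T T = 0 \<longleftrightarrow>
    circ1 \<phi>\<^sub>1 \<mu>\<^sub>1 + circ1 \<mu>\<^sub>1 \<phi>\<^sub>1 = 0 \<and>
    circ1 \<psi> \<phi>\<^sub>1 + circ1 \<phi>\<^sub>1 \<psi> + circ1 \<mu>\<^sub>1 \<mu>\<^sub>1 = 0 \<and>
    circ1 \<phi>\<^sub>1 \<mu>\<^sub>2 + circ1 \<mu>\<^sub>2 \<phi>\<^sub>1 + (circ1 \<psi> \<mu>\<^sub>1 + circ1 \<mu>\<^sub>1 \<psi>) = 0 \<and>
    circ1 \<phi>\<^sub>1 \<phi>\<^sub>2 + circ1 \<phi>\<^sub>2 \<phi>\<^sub>1 + (circ1 \<mu>\<^sub>1 \<mu>\<^sub>2 + circ1 \<mu>\<^sub>2 \<mu>\<^sub>1) + circ1 \<psi> \<psi> = 0 \<and>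
    circ1 \<mu>\<^sub>1 \<phi>\<^sub>2 + circ1 \<phi>\<^sub>2 \<mu>\<^sub>1 + (circ1 \<psi> \<mu>\<^sub>2 + circ1 \<mu>\<^sub>2 \<psi>) = 0 \<and>
    circ1 \<psi> \<phi>\<^sub>2 + circ1 \<phi>\<^sub>2 \<psi> + circ1 \<mu>\<^sub>2 \<mu>\<^sub>2 = 0 \<and>
    circ1 \<mu>\<^sub>2 \<phi>\<^sub>2 + circ1 \<phi>\<^sub>2 \<mu>\<^sub>2 = 0"
proof -
  (* phi1, mu1, psi, mu2, phi2 have bidegree indices -1, ..., 3; entry m collects the
     compositions whose indices add up to m. *)
  define parts where "parts = (
    [(-2 :: int, circ1 \<phi>\<^sub>1 \<phi>\<^sub>1),
     (-1, circ1 \<phi>\<^sub>1 \<mu>\<^sub>1 + circ1 \<mu>\<^sub>1 \<phi>\<^sub>1),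
     (0, circ1 \<psi> \<phi>\<^sub>1 + circ1 \<phi>\<^sub>1 \<psi> + circ1 \<mu>\<^sub>1 \<mu>\<^sub>1),
     (1, circ1 \<phi>\<^sub>1 \<mu>\<^sub>2 + circ1 \<mu>\<^sub>2 \<phi>\<^sub>1 + (circ1 \<psi> \<mu>\<^sub>1 + circ1 \<mu>\<^sub>1 \<psi>)),
     (2, circ1 \<phi>\<^sub>1 \<phi>\<^sub>2 + circ1 \<phi>\<^sub>2 \<phi>\<^sub>1 + (circ1 \<mu>\<^sub>1 \<mu>\<^sub>2 + circ1 \<mu>\<^sub>2 \<mu>\<^sub>1) + circ1 \<psi> \<psi>),
     (3, circ1 \<mu>\<^sub>1 \<phi>\<^sub>2 + circ1 \<phi>\<^sub>2 \<mu>\<^sub>1 + (circ1 \<psi> \<mu>\<^sub>2 + circ1 \<mu>\<^sub>2 \<psi>)),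
     (4, circ1 \<psi> \<phi>\<^sub>2 + circ1 \<phi>\<^sub>2 \<psi> + circ1 \<mu>\<^sub>2 \<mu>\<^sub>2),
     (5, circ1 \<mu>\<^sub>2 \<phi>\<^sub>2 + circ1 \<phi>\<^sub>2 \<mu>\<^sub>2),
     (6, circ1 \<phi>\<^sub>2 \<phi>\<^sub>2)])"
  note components = additive3_components bidegree3_components
  have "circ1 T T = circ1 (\<phi>\<^sub>1 + \<mu>\<^sub>1 + \<psi> + \<mu>\<^sub>2 + \<phi>\<^sub>2) (\<phi>\<^sub>1 + \<mu>\<^sub>1 + \<psi> + \<mu>\<^sub>2 + \<phi>\<^sub>2)"
    unfolding assms(2-6) by (intro arg_cong2[where f = circ1] lts_cochain_decomposition alt)
  also have "\<dots> = (\<Sum>(m, E)\<leftarrow>parts. E)" (is "_ = ?sum")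
    using components
    by (simp add: parts_def assms(2-6) circ1_add_left circ1_add_right additive3_plus algebra_simps)
  finally have "circ1 T T = ?sum" .
  moreover have "?sum = 0 \<longleftrightarrow> (\<forall>(m, E)\<in>set parts. E = 0)"
  proof (rule sum_list_bidegree5_eq_0_iff)
    show "distinct (map fst parts)"
      by (simp add: parts_def)
    show "additive5 E \<and> bidegree5 m E" if "(m, E) \<in> set parts" for m E
      using that components unfolding parts_def assms(2-6)
      by (auto intro!: additive5_plus additive5_circ1 bidegree5_plus bidegree5_circ1)
  qed
  ultimately show ?thesis
    by (simp add: parts_def assms(2-6) circ1_phi1_phi1 circ1_phi2_phi2)
qed

end

lemma module_prod_scale:
  assumes "vector_space s1" and "vector_space s2"
  shows "module (prod_scale s1 s2)"
  using assms unfolding vector_space_def module_def prod_scale_def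
  by (simp add: prod_eq_iff)

lemma scale_half_double:
  fixes S :: "'k::field_char_0 \<Rightarrow> 'v::ab_group_add \<Rightarrow> 'v" and X :: 'v
  assumes "module S"
  shows "S (1/2) (X + X) = X"
  using module.scale_left_distrib[OF assms, of "1/2" "1/2" X]
  by (simp add: module.scale_right_distrib[OF assms] module.scale_one[OF assms])

lemma double_eq_0_iff:
  fixes S :: "'k::field_char_0 \<Rightarrow> 'v::ab_group_add \<Rightarrow> 'v" and X :: 'v
  assumes "module S"
  shows "X + X = 0 \<longleftrightarrow> X = 0"
proof
  assume "X + X = 0"
  then show "X = 0"
    using scale_half_double[OF assms, of X] by (simp add: module.scale_zero_right[OF assms])
qed simp

theorem proposition3p8:
  fixes s1 :: "'k::field_char_0 \<Rightarrow> 'a::ab_group_add \<Rightarrow> 'a"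
    and s2 :: "'k \<Rightarrow> 'b::ab_group_add \<Rightarrow> 'b"
    and T :: "('a \<times> 'b) \<Rightarrow> ('a \<times> 'b) \<Rightarrow> ('a \<times> 'b) \<Rightarrow> ('a \<times> 'b)"
  assumes "vector_space s1" and "vector_space s2"
    and "LTS_cochain1 (prod_scale s1 s2) T"
  shows "cochain_zero 2 (brk (prod_scale s1 s2) 1 1 (ch1 T) (ch1 T)) \<longleftrightarrow>
    (let S = prod_scale s1 s2; B = brk S 1 1;
         F1 = ch1 (phi1 T); M1 = ch1 (mu1 T); P = ch1 (psi T); M2 = ch1 (mu2 T); F2 = ch1 (phi2 T)
     in cochain_zero 2 (B F1 M1) \<and>
        cochain_zero 2 (cadd (B P F1) (cscale S (1/2) (B M1 M1))) \<and>
        cochain_zero 2 (cadd (B F1 M2) (B P M1)) \<and>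
        cochain_zero 2 (cadd (cadd (B F1 F2) (B M1 M2)) (cscale S (1/2) (B P P))) \<and>
        cochain_zero 2 (cadd (B M1 F2) (B P M2)) \<and>
        cochain_zero 2 (cadd (B P F2) (cscale S (1/2) (B M2 M2))) \<and>
        cochain_zero 2 (B M2 F2))"
proof -
  have S: "module (prod_scale s1 s2)"
    using assms(1,2) by (rule module_prod_scale)
  have add: "additive3 T" and alt: "\<And>x y. T x x y = 0"
    using assms(3) by (auto simp: LTS_cochain1_def intro: additive3_if_trilinear)
  have bracket_eq_0_iff: "(\<forall>x0 y0 x1 y1 x. circ1 T T x0 y0 x1 y1 x + circ1 T T x0 y0 x1 y1 x = 0)
      \<longleftrightarrow> circ1 T T = 0"
    by (simp add: double_eq_0_iff[OF S] fun_eq_iff)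
  show ?thesis
    unfolding Let_def cochain_zero_2_iff cadd_def cscale_def brk_ch1[OF S] scale_half_double[OF S]
      bracket_eq_0_iff maurer_cartan_components[OF add alt]
    by (simp add: fun_eq_iff)
qed

end
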